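(* Let $n\ge1$. For each $i\in\{1,\dots,n\}$ let $\mathbf{r}_i(1),\mathbf{r}_i(2),\dots,\mathbf{r}_i(L_i)$ be a path of pairwise distinct lattice sites with $\mathbf{r}_i(1)$ equal to the origin and $L_i\ge n$. A configuration is a choice of sticking times $\tau_i\in\{1,\dots,L_i\}$, with labels $\mathbf{s}_i=\mathbf{r}_i(\tau_i)$. Call it well-ordered if for all $i,j$ and all $t<\tau_i$, $\mathbf{s}_j=\mathbf{r}_i(t)$ implies $j<i$. Let the cluster $S$ be the set of live sites $\{\mathbf{r}_i(t): 1\le i\le n,\ t\le\tau_i\}$. Call the configuration singly-occupied if every site of $S$ equals $\mathbf{s}_j$ for exactly one $j$. Then there is exactly one configuration that is both well-ordered and singly-occupied. It is the sequential-dynamics configuration: for each $i$ in increasing order, $\tau_i$ is the least $t$ such that $\mathbf{r}_i(t)\notin\{\mathbf{s}_1,\dots,\mathbf{s}_{i-1}\}$. *)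

theory Defs
  imports Main
begin

(* Paths: r i t is the site r_i(t) of walker i at time t (1-based). Sticking times: tau i. *)

definition is_config :: "nat \<Rightarrow> (nat \<Rightarrow> nat) \<Rightarrow> (nat \<Rightarrow> nat) \<Rightarrow> bool" where
  "is_config n L tau \<longleftrightarrow> (\<forall>i\<in>{1..n}. tau i \<in> {1..L i})"

definition well_ordered :: "nat \<Rightarrow> (nat \<Rightarrow> nat \<Rightarrow> 'a) \<Rightarrow> (nat \<Rightarrow> nat) \<Rightarrow> bool" where
  "well_ordered n r tau \<longleftrightarrow>
     (\<forall>i\<in>{1..n}. \<forall>j\<in>{1..n}. \<forall>t. 1 \<le> t \<and> t < tau i \<and> r j (tau j) = r i t \<longrightarrow> j < i)"

definition cluster :: "nat \<Rightarrow> (nat \<Rightarrow> nat \<Rightarrow> 'a) \<Rightarrow> (nat \<Rightarrow> nat) \<Rightarrow> 'a set" where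
  "cluster n r tau = {r i t | i t. 1 \<le> i \<and> i \<le> n \<and> 1 \<le> t \<and> t \<le> tau i}"

definition singly_occupied :: "nat \<Rightarrow> (nat \<Rightarrow> nat \<Rightarrow> 'a) \<Rightarrow> (nat \<Rightarrow> nat) \<Rightarrow> bool" where
  "singly_occupied n r tau \<longleftrightarrow>
     (\<forall>x\<in>cluster n r tau. \<exists>!j. j \<in> {1..n} \<and> r j (tau j) = x)"

primrec seq_labels :: "(nat \<Rightarrow> nat \<Rightarrow> 'a) \<Rightarrow> nat \<Rightarrow> 'a list" where
  "seq_labels r 0 = []"
| "seq_labels r (Suc k) =
     seq_labels r k @ [r (Suc k) (LEAST t. 1 \<le> t \<and> r (Suc k) t \<notin> set (seq_labels r k))]"

definition seq_tau :: "(nat \<Rightarrow> nat \<Rightarrow> 'a) \<Rightarrow> nat \<Rightarrow> nat" where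
  "seq_tau r i = (LEAST t. 1 \<le> t \<and> r i t \<notin> set (seq_labels r (i - 1)))"

end

theory Submission
  imports Defs
begin

text \<open>In any well-ordered, singly-occupied
configuration, the sites walker \<open>i\<close> passes before sticking are labels of earlier walkers
(well-orderedness and occupation of the cluster), while its own label is not (single
occupation); so \<open>\<tau>\<^sub>i\<close> is the first time walker \<open>i\<close> leaves \<open>{s\<^sub>1, \<dots>, s\<^sub>i\<^sub>-\<^sub>1}\<close>, which is the
sequential rule, and induction on \<open>i\<close> gives uniqueness. For existence, the first \<open>i\<close> sites
of walker \<open>i\<close> are distinct while only \<open>i - 1\<close> labels precede it, so the sequential time
exists, is at most \<open>i \<le> L\<^sub>i\<close>, and produces pairwise distinct labels; from this
well-orderedness and single occupation follow directly.\<close>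

definition seq_label :: "(nat \<Rightarrow> nat \<Rightarrow> 'a) \<Rightarrow> nat \<Rightarrow> 'a" where
  "seq_label r i = r i (seq_tau r i)"

lemma set_seq_labels: "set (seq_labels r k) = seq_label r ` {1..k}"
proof (induction k)
  case (Suc k)
  have "{1..Suc k} = insert (Suc k) {1..k}" by auto
  with Suc show ?case by (simp add: seq_label_def seq_tau_def)
qed simp

text \<open>Never simplify with both this lemma and \<open>seq_label_def\<close>: they rewrite into each other.\<close>

lemma seq_tau_Least: "seq_tau r i = (LEAST t. 1 \<le> t \<and> r i t \<notin> seq_label r ` {1..<i})"
proof -
  have "{1..i - 1} = {1..<i}" by auto
  then show ?thesis by (simp add: seq_tau_def set_seq_labels)
qed

lemma inj_on_exists_not_in:
  assumes "inj_on f B" "finite A" "card A < card B"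
  shows "\<exists>x\<in>B. f x \<notin> A"
proof (rule ccontr)
  assume "\<not> ?thesis"
  then have "f ` B \<subseteq> A" by blast
  then have "card (f ` B) \<le> card A" by (rule card_mono[OF \<open>finite A\<close>])
  with assms(3) show False by (simp add: card_image[OF \<open>inj_on f B\<close>])
qed

lemma seq_tau_fresh_exists:
  assumes "1 \<le> i" "inj_on (r i) {1..i}"
  shows "\<exists>t\<in>{1..i}. r i t \<notin> seq_label r ` {1..<i}"
proof (rule inj_on_exists_not_in[OF assms(2)])
  show "card (seq_label r ` {1..<i}) < card {1..i}"
    using card_image_le[of "{1..<i}" "seq_label r"] assms(1) by simp
qed simp

lemma seq_tau_bounds_fresh:
  assumes "1 \<le> i" "inj_on (r i) {1..i}"
  shows "1 \<le> seq_tau r i" and "seq_tau r i \<le> i" and "seq_label r i \<notin> seq_label r ` {1..<i}"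
proof -
  let ?P = "\<lambda>t. 1 \<le> t \<and> r i t \<notin> seq_label r ` {1..<i}"
  obtain t where t: "t \<in> {1..i}" "?P t"
    using seq_tau_fresh_exists[of i r] assms by auto
  have least: "Least ?P = seq_tau r i"
    by (simp only: seq_tau_Least)
  have "?P (seq_tau r i)"
    using LeastI[of ?P, OF t(2)] unfolding least .
  then show "1 \<le> seq_tau r i" "seq_label r i \<notin> seq_label r ` {1..<i}"
    by (simp_all add: seq_label_def)
  show "seq_tau r i \<le> i"
    using Least_le[of ?P, OF t(2)] t(1) unfolding least by simp
qed

lemma seq_label_before_seq_tau:
  assumes "1 \<le> t" "t < seq_tau r i"
  shows "r i t \<in> seq_label r ` {1..<i}"
  using not_less_Least[of t "\<lambda>t. 1 \<le> t \<and> r i t \<notin> seq_label r ` {1..<i}"] assms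
  by (auto simp: seq_tau_Least)

lemma inj_on_seq_label:
  assumes "\<forall>i\<in>{1..n}. inj_on (r i) {1..i}"
  shows "inj_on (seq_label r) {1..n}"
proof (rule linorder_inj_onI')
  fix i j assume ij: "i \<in> {1..n}" "j \<in> {1..n}" "i < j"
  then have "seq_label r j \<notin> seq_label r ` {1..<j}"
    using seq_tau_bounds_fresh(3)[of j r] assms by simp
  moreover have "i \<in> {1..<j}" using ij by simp
  ultimately show "seq_label r i \<noteq> seq_label r j" by (metis imageI)
qed

lemma cluster_seq_tau_subset: "cluster n r (seq_tau r) \<subseteq> seq_label r ` {1..n}"
proof
  fix x assume "x \<in> cluster n r (seq_tau r)"
  then obtain i t where it: "i \<in> {1..n}" "1 \<le> t" "t \<le> seq_tau r i" "x = r i t"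
    unfolding cluster_def by auto
  show "x \<in> seq_label r ` {1..n}"
  proof (cases "t = seq_tau r i")
    case True
    with it show ?thesis by (simp add: seq_label_def)
  next
    case False
    with it have "x \<in> seq_label r ` {1..<i}"
      using seq_label_before_seq_tau[of t r i] by simp
    moreover have "{1..<i} \<subseteq> {1..n}" using it(1) by auto
    ultimately show ?thesis by blast
  qed
qed

lemma is_config_seq_tau:
  assumes "\<forall>i\<in>{1..n}. inj_on (r i) {1..i}" "\<forall>i\<in>{1..n}. i \<le> L i"
  shows "is_config n L (seq_tau r)"
  unfolding is_config_def
proof
  fix i assume "i \<in> {1..n}"
  with assms have "1 \<le> i" "inj_on (r i) {1..i}" "i \<le> L i" by simp_all
  with seq_tau_bounds_fresh(1,2)[of i r] show "seq_tau r i \<in> {1..L i}" by simp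
qed

lemma well_ordered_seq_tau:
  assumes "\<forall>i\<in>{1..n}. inj_on (r i) {1..i}"
  shows "well_ordered n r (seq_tau r)"
  unfolding well_ordered_def
proof (intro ballI allI impI)
  fix i j t
  assume ij: "i \<in> {1..n}" "j \<in> {1..n}" and t: "1 \<le> t \<and> t < seq_tau r i \<and> r j (seq_tau r j) = r i t"
  then obtain k where k: "k \<in> {1..<i}" "seq_label r j = seq_label r k"
    using seq_label_before_seq_tau[of t r i] by (auto simp: seq_label_def)
  with ij have "j = k"
    using inj_on_seq_label[OF assms] by (auto dest: inj_onD)
  with k show "j < i" by simp
qed

lemma singly_occupied_seq_tau:
  assumes "\<forall>i\<in>{1..n}. inj_on (r i) {1..i}"
  shows "singly_occupied n r (seq_tau r)"
  unfolding singly_occupied_def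
proof
  fix x assume "x \<in> cluster n r (seq_tau r)"
  then obtain j where j: "j \<in> {1..n}" "seq_label r j = x"
    using cluster_seq_tau_subset[of n r] by auto
  then show "\<exists>!j. j \<in> {1..n} \<and> r j (seq_tau r j) = x"
    using inj_on_seq_label[OF assms] unfolding seq_label_def inj_on_def by blast
qed

lemma well_ordered_singly_occupied_Least:
  assumes "is_config n L tau" "well_ordered n r tau" "singly_occupied n r tau" "i \<in> {1..n}"
  shows "tau i = (LEAST t. 1 \<le> t \<and> r i t \<notin> (\<lambda>j. r j (tau j)) ` {1..<i})"
proof (rule Least_equality[symmetric])
  have in_cluster: "r i t \<in> cluster n r tau" if "1 \<le> t" "t \<le> tau i" for t
    using assms(4) that unfolding cluster_def by auto
  have "1 \<le> tau i"
    using assms(1,4) unfolding is_config_def by auto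
  moreover have "r i (tau i) \<notin> (\<lambda>j. r j (tau j)) ` {1..<i}"
  proof
    assume "r i (tau i) \<in> (\<lambda>j. r j (tau j)) ` {1..<i}"
    then obtain k where k: "k \<in> {1..<i}" "r k (tau k) = r i (tau i)" by auto
    have "\<exists>!j. j \<in> {1..n} \<and> r j (tau j) = r i (tau i)"
      using assms(3) in_cluster[OF \<open>1 \<le> tau i\<close>] unfolding singly_occupied_def by blast
    moreover have "k \<in> {1..n}" using k(1) assms(4) by auto
    ultimately have "k = i" using k(2) assms(4) by blast
    with k(1) show False by simp
  qed
  ultimately show "1 \<le> tau i \<and> r i (tau i) \<notin> (\<lambda>j. r j (tau j)) ` {1..<i}" by blast
  show "tau i \<le> t" if "1 \<le> t \<and> r i t \<notin> (\<lambda>j. r j (tau j)) ` {1..<i}" for t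
  proof (rule ccontr)
    assume "\<not> tau i \<le> t"
    then have t: "1 \<le> t" "t < tau i" using that by simp_all
    then have "\<exists>!j. j \<in> {1..n} \<and> r j (tau j) = r i t"
      using assms(3) in_cluster[of t] unfolding singly_occupied_def by simp
    then obtain j where j: "j \<in> {1..n}" "r j (tau j) = r i t" by blast
    with t assms(2,4) have "j < i" unfolding well_ordered_def by blast
    with j(1) have "j \<in> {1..<i}" by simp
    then have "r j (tau j) \<in> (\<lambda>j. r j (tau j)) ` {1..<i}" by (rule imageI)
    with j(2) that show False by simp
  qed
qed

lemma well_ordered_singly_occupied_unique:
  assumes "is_config n L tau" "well_ordered n r tau" "singly_occupied n r tau"
  shows "\<forall>i\<in>{1..n}. tau i = seq_tau r i"
proof
  fix i show "i \<in> {1..n} \<Longrightarrow> tau i = seq_tau r i"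
  proof (induction i rule: less_induct)
    case (less i)
    then have "tau j = seq_tau r j" if "j \<in> {1..<i}" for j
      using that by simp
    then have "(\<lambda>j. r j (tau j)) ` {1..<i} = seq_label r ` {1..<i}"
      unfolding seq_label_def by (intro image_cong) simp_all
    then show ?case
      using well_ordered_singly_occupied_Least[OF assms less.prems] by (simp add: seq_tau_Least)
  qed
qed

theorem mainTheorem9:
  fixes n :: nat and L :: "nat \<Rightarrow> nat" and r :: "nat \<Rightarrow> nat \<Rightarrow> 'a" and origin :: 'a
  assumes "n \<ge> 1"
    and "\<forall>i\<in>{1..n}. r i 1 = origin"
    and "\<forall>i\<in>{1..n}. inj_on (r i) {1..L i}"
    and "\<forall>i\<in>{1..n}. L i \<ge> n"
  shows "is_config n L (seq_tau r)
         \<and> well_ordered n r (seq_tau r) \<and> singly_occupied n r (seq_tau r)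
         \<and> (\<forall>tau. is_config n L tau \<and> well_ordered n r tau \<and> singly_occupied n r tau
                 \<longrightarrow> (\<forall>i\<in>{1..n}. tau i = seq_tau r i))"
proof -
  have long: "\<forall>i\<in>{1..n}. i \<le> L i"
    using assms(4) by auto
  have inj: "\<forall>i\<in>{1..n}. inj_on (r i) {1..i}"
  proof
    fix i assume "i \<in> {1..n}"
    with assms(3) have "inj_on (r i) {1..L i}" by simp
    moreover from long \<open>i \<in> {1..n}\<close> have "{1..i} \<subseteq> {1..L i}" by simp
    ultimately show "inj_on (r i) {1..i}" by (rule inj_on_subset)
  qed
  have "\<forall>tau. is_config n L tau \<and> well_ordered n r tau \<and> singly_occupied n r tau
          \<longrightarrow> (\<forall>i\<in>{1..n}. tau i = seq_tau r i)"
  proof (intro allI impI)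
    fix tau assume "is_config n L tau \<and> well_ordered n r tau \<and> singly_occupied n r tau"
    then show "\<forall>i\<in>{1..n}. tau i = seq_tau r i"
      by (elim conjE) (rule well_ordered_singly_occupied_unique)
  qed
  with is_config_seq_tau[OF inj long] well_ordered_seq_tau[OF inj] singly_occupied_seq_tau[OF inj]
  show ?thesis by (intro conjI)
qed

end
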